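(* In the setting described in the context, for every $t\in\{0,1,\dots,T\}$ the gradient $\nabla V^{(t)}_\theta$ (with respect to $(\theta,s)$), viewed as a function of $(\theta,s)$, is Lipschitz with constant $L_{\nabla V}^{(t)}=44T^5\bar L_{R_\theta}\bar L_{f_\theta}^{4(T-t-1)}$.
   Context: Transitions $s_{t+1}=f(s_t,a_t)+\zeta_t$ with $\zeta_t\sim p(\zeta)$ i.i.d.; deterministic policy $\pi_\theta$, $\theta\in\Theta\subseteq\mathbb{R}^{d_\Theta}$; $f_\theta(s)=f(s,\pi_\theta(s))$ and $R_\theta(s)=R(s,\pi_\theta(s))$, viewed as functions of $(\theta,s)$. Value functions: $V^{(T)}_\theta\equiv 0$ and $V^{(t)}_\theta(s)=R_\theta(s)+\mathbb{E}_{p(\zeta)}[V^{(t+1)}_\theta(f_\theta(s)+\zeta)]$ for $t=0,\dots,T-1$. $L_h$ denotes a Lipschitz constant (Euclidean norm, matrices unrolled as vectors) of $h$ jointly in $(\theta,s)$, and $\bar L_h=\max\{L_{\nabla h},L_h,1\}$. Standing assumption: $f_\theta,R_\theta$ are Lipschitz and twice continuously differentiable with Lipschitz first derivative. *)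

theory Defs
  imports "HOL-Analysis.Analysis" "HOL-Probability.Probability"
begin

definition frob :: "('a::euclidean_space \<Rightarrow>\<^sub>L 'b::real_normed_vector) \<Rightarrow> real" where
  "frob A = sqrt (\<Sum>b\<in>Basis. (norm (blinfun_apply A b))\<^sup>2)"

definition Lbar :: "real \<Rightarrow> real \<Rightarrow> real" where
  "Lbar LD L = max LD (max L 1)"

definition fcl :: "('s \<Rightarrow> 'a \<Rightarrow> 's) \<Rightarrow> ('th \<Rightarrow> 's \<Rightarrow> 'a) \<Rightarrow> 'th \<times> 's \<Rightarrow> 's" where
  "fcl f pol = (\<lambda>(th, s). f s (pol th s))"

definition Rcl :: "('s \<Rightarrow> 'a \<Rightarrow> real) \<Rightarrow> ('th \<Rightarrow> 's \<Rightarrow> 'a) \<Rightarrow> 'th \<times> 's \<Rightarrow> real" where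
  "Rcl R pol = (\<lambda>(th, s). R s (pol th s))"

primrec Wv :: "('th \<times> 's \<Rightarrow> 's::real_normed_vector) \<Rightarrow> ('th \<times> 's \<Rightarrow> real) \<Rightarrow> 's measure
               \<Rightarrow> nat \<Rightarrow> 'th \<times> 's \<Rightarrow> real" where
  "Wv fth Rth p 0 = (\<lambda>x. 0)"
| "Wv fth Rth p (Suc n) = (\<lambda>x. Rth x + (\<integral>z. Wv fth Rth p n (fst x, fth x + z) \<partial>p))"

text \<open>V^{(t)} for horizon T (meaningful for t \<le> T): V^{(t)} = W (T - t).\<close>
definition Vt :: "('th \<times> 's \<Rightarrow> 's::real_normed_vector) \<Rightarrow> ('th \<times> 's \<Rightarrow> real) \<Rightarrow> 's measure
               \<Rightarrow> nat \<Rightarrow> nat \<Rightarrow> 'th \<times> 's \<Rightarrow> real" where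
  "Vt fth Rth p T t = Wv fth Rth p (T - t)"

end

theory Submission
  imports Defs
begin

(* Backward induction on the number n of remaining steps.  If G is a gradient of the n-step value
   function W_n, differentiating W_(n+1)(th, s) = R(th, s) + E[W_n(th, f(th, s) + zeta)] under the
   expectation gives the gradient R' + (E[G_th], 0) + Df^T E[G_s], where G = (G_th, G_s).  To keep the
   constant polynomial in T, the Lipschitz constants of G_th and G_s are tracked separately in th and in
   s, together with a bound on |G_s|: only the state argument is moved by the dynamics, so only the
   constants in s pick up a factor of L_f.  The resulting linear recursions have solutions of order
   n^k L_R L_f^(2n) with k <= 4, and 4 n^4 L_f^(2n) <= 44 T^5 L_f^(4(n-1)) for 2 <= n <= T. *)

lemma norm_blinfun_le_frob:
  fixes A :: "'a::euclidean_space \<Rightarrow>\<^sub>L 'b::real_normed_vector"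
  shows "norm A \<le> frob A"
proof (rule norm_blinfun_bound)
  show "0 \<le> frob A" by (simp add: frob_def sum_nonneg)
  fix h
  have "A h = (\<Sum>b\<in>Basis. (h \<bullet> b) *\<^sub>R A b)"
    by (simp add: blinfun.sum_right[symmetric] blinfun.scaleR_right[symmetric] euclidean_representation)
  then have "norm (A h) \<le> (\<Sum>b\<in>Basis. \<bar>h \<bullet> b\<bar> * norm (A b))"
    using norm_sum[of "\<lambda>b. (h \<bullet> b) *\<^sub>R A b" Basis] by simp
  also have "\<dots> \<le> L2_set (\<lambda>b. h \<bullet> b) Basis * L2_set (\<lambda>b. norm (A b)) Basis"
    using L2_set_mult_ineq[of "\<lambda>b. h \<bullet> b" "\<lambda>b. norm (A b)" Basis] by simp
  also have "\<dots> = norm h * frob A"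
    by (simp add: L2_set_def frob_def norm_eq_sqrt_inner euclidean_inner[of h h] power2_eq_square)
  finally show "norm (A h) \<le> frob A * norm h" by (simp add: mult.commute)
qed

lemma adjoint_blinfun_diff:
  fixes A B :: "'a::euclidean_space \<Rightarrow>\<^sub>L 'b::euclidean_space"
  shows "adjoint (A - B) v = adjoint A v - adjoint B v"
  by (rule euclidean_eqI)
     (simp add: adjoint_clauses(2) bounded_linear.linear[OF blinfun.bounded_linear_right]
        inner_diff_left blinfun.diff_left inner_diff_right)

lemma norm_adjoint_blinfun_le:
  fixes A :: "'a::euclidean_space \<Rightarrow>\<^sub>L 'b::euclidean_space"
  shows "norm (adjoint A v) \<le> norm A * norm v"
proof -
  let ?w = "adjoint A v"
  have "norm ?w ^ 2 = v \<bullet> A ?w"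
    by (simp add: power2_norm_eq_inner adjoint_clauses(2) bounded_linear.linear[OF blinfun.bounded_linear_right])
  also have "\<dots> \<le> norm v * (norm A * norm ?w)"
    using Cauchy_Schwarz_ineq2[of v "A ?w"] norm_blinfun[of A ?w] by (smt (verit) mult_left_mono norm_ge_zero)
  finally show ?thesis
    by (cases "?w = 0") (auto simp: power2_eq_square mult_ac)
qed

lemma norm_derivative_le_lipschitz:
  fixes g :: "'a::real_normed_vector \<Rightarrow> 'b::real_normed_vector"
  assumes "open S" "x \<in> S" and g: "(g has_derivative blinfun_apply A) (at x)"
    and lip: "\<And>y z. y \<in> S \<Longrightarrow> z \<in> S \<Longrightarrow> dist (g y) (g z) \<le> L * dist y z" and "0 \<le> L"
  shows "norm A \<le> L"
proof (rule norm_blinfun_bound[OF \<open>0 \<le> L\<close>])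
  fix h
  show "norm (A h) \<le> L * norm h"
  proof (cases "h = 0")
    case False
    obtain \<rho> where "\<rho> > 0" and ball: "ball x \<rho> \<subseteq> S" using assms(1,2) open_contains_ball by blast
    show ?thesis
    proof (rule field_le_epsilon)
      fix e :: real assume "0 < e"
      then have "e / norm h > 0" using False by simp
      then obtain d where "d > 0" and d: "\<And>y. norm (y - x) < d \<Longrightarrow>
          norm (g y - g x - A (y - x)) \<le> e / norm h * norm (y - x)"
        using g unfolding has_derivative_within_alt by blast
      define t where "t = min d \<rho> / (2 * norm h)"
      define y where "y = x + t *\<^sub>R h"
      have "t > 0" using \<open>d > 0\<close> \<open>\<rho> > 0\<close> False by (simp add: t_def)
      have ny: "norm (y - x) = t * norm h" and "t * norm h < d" "t * norm h < \<rho>"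
        using \<open>t > 0\<close> \<open>d > 0\<close> \<open>\<rho> > 0\<close> False by (simp_all add: y_def t_def)
      then have "y \<in> S" using ball by (auto simp: dist_norm norm_minus_commute)
      have "t * norm (A h) = norm (A (y - x))"
        using \<open>t > 0\<close> by (simp add: y_def blinfun.scaleR_right)
      also have "\<dots> \<le> norm (g y - g x) + norm (g y - g x - A (y - x))"
        using norm_triangle_ineq4[of "g y - g x" "g y - g x - A (y - x)"] by simp
      also have "\<dots> \<le> L * (t * norm h) + e / norm h * (t * norm h)"
        using lip[OF \<open>y \<in> S\<close> assms(2)] d[of y] ny \<open>t * norm h < d\<close> by (simp add: dist_norm)
      also have "\<dots> = t * (L * norm h + e)" using False by (simp add: field_simps)
      finally show "norm (A h) \<le> L * norm h + e" using \<open>t > 0\<close> by simp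
    qed
  qed simp
qed

lemma taylor_remainder_le_lipschitz_gradient:
  fixes W :: "'a::real_inner \<Rightarrow> real"
  assumes seg: "closed_segment a b \<subseteq> S"
    and W: "\<And>y. y \<in> S \<Longrightarrow> (W has_derivative (\<lambda>h. G y \<bullet> h)) (at y)"
    and G: "\<And>y. y \<in> S \<Longrightarrow> dist (G y) (G a) \<le> K * dist y a" and "0 \<le> K"
  shows "\<bar>W b - W a - G a \<bullet> (b - a)\<bar> \<le> K * (norm (b - a))\<^sup>2"
proof -
  let ?g = "\<lambda>y. W y - G a \<bullet> y"
  have "(?g has_derivative (\<lambda>h. (G y - G a) \<bullet> h)) (at y within closed_segment a b)"
    if "y \<in> closed_segment a b" for y
  proof -
    have "(?g has_derivative (\<lambda>h. G y \<bullet> h - G a \<bullet> h)) (at y)"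
      using that seg W[of y] by (auto intro!: derivative_eq_intros)
    then show ?thesis by (simp add: inner_diff_left has_derivative_at_withinI)
  qed
  moreover have "onorm (\<lambda>h. (G y - G a) \<bullet> h) \<le> K * norm (b - a)"
    if "y \<in> closed_segment a b" for y
  proof -
    have "onorm (\<lambda>h. (G y - G a) \<bullet> h) \<le> norm (G y - G a)"
      by (rule onorm_bound) (auto simp: Cauchy_Schwarz_ineq2)
    also have "\<dots> \<le> K * dist y a" using G[of y] that seg by (auto simp: dist_norm)
    also have "\<dots> \<le> K * norm (b - a)"
      using segment_bound1[OF that] \<open>0 \<le> K\<close> by (simp add: dist_norm mult_left_mono)
    finally show ?thesis .
  qed
  ultimately have "norm (?g b - ?g a) \<le> K * norm (b - a) * norm (b - a)"
    by (intro differentiable_bound[OF convex_closed_segment]) auto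
  then show ?thesis by (simp add: inner_diff_right power2_eq_square algebra_simps)
qed

lemma le_mult_dist_mono: "\<lbrakk>d \<le> L * dist x y; L \<le> L'\<rbrakk> \<Longrightarrow> d \<le> L' * dist x y"
  by (meson mult_right_mono order_trans zero_le_dist)

context prob_space
begin

lemma norm_integral_le_const:
  fixes f :: "'a \<Rightarrow> 'b::{banach,second_countable_topology}"
  assumes "integrable M f" "\<And>x. norm (f x) \<le> c"
  shows "norm (integral\<^sup>L M f) \<le> c"
proof -
  have "norm (integral\<^sup>L M f) \<le> (\<integral>x. norm (f x) \<partial>M)" by (rule integral_norm_bound)
  also have "\<dots> \<le> (\<integral>x. c \<partial>M)" using assms by (intro integral_mono) auto
  finally show ?thesis by (simp add: prob_space)
qed

lemma dist_integral_le_const: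
  fixes f g :: "'a \<Rightarrow> 'b::{banach,second_countable_topology}"
  assumes "integrable M f" "integrable M g" "\<And>x. dist (f x) (g x) \<le> c"
  shows "dist (integral\<^sup>L M f) (integral\<^sup>L M g) \<le> c"
  using norm_integral_le_const[of "\<lambda>x. f x - g x" c] assms by (simp add: dist_norm)

end

definition separately_lipschitz ::
    "'p::metric_space set \<Rightarrow> real \<Rightarrow> real \<Rightarrow> ('p \<times> 's::metric_space \<Rightarrow> 'y::metric_space) \<Rightarrow> bool" where
  "separately_lipschitz \<Theta> Lp Ls H \<longleftrightarrow>
     (\<forall>\<theta>\<in>\<Theta>. \<forall>\<theta>'\<in>\<Theta>. \<forall>s. dist (H (\<theta>, s)) (H (\<theta>', s)) \<le> Lp * dist \<theta> \<theta>') \<and>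
     (\<forall>\<theta>\<in>\<Theta>. \<forall>s s'. dist (H (\<theta>, s)) (H (\<theta>, s')) \<le> Ls * dist s s')"

lemma separately_lipschitzI:
  assumes "\<And>\<theta> \<theta>' s. \<theta> \<in> \<Theta> \<Longrightarrow> \<theta>' \<in> \<Theta> \<Longrightarrow> dist (H (\<theta>, s)) (H (\<theta>', s)) \<le> Lp * dist \<theta> \<theta>'"
    and "\<And>\<theta> s s'. \<theta> \<in> \<Theta> \<Longrightarrow> dist (H (\<theta>, s)) (H (\<theta>, s')) \<le> Ls * dist s s'"
  shows "separately_lipschitz \<Theta> Lp Ls H"
  using assms by (simp add: separately_lipschitz_def)

lemma separately_lipschitzD:
  assumes "separately_lipschitz \<Theta> Lp Ls H"
  shows "\<theta> \<in> \<Theta> \<Longrightarrow> \<theta>' \<in> \<Theta> \<Longrightarrow> dist (H (\<theta>, s)) (H (\<theta>', s)) \<le> Lp * dist \<theta> \<theta>'"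
    and "\<theta> \<in> \<Theta> \<Longrightarrow> dist (H (\<theta>, s)) (H (\<theta>, s')) \<le> Ls * dist s s'"
  using assms by (auto simp: separately_lipschitz_def)

lemma separately_lipschitz_cong:
  assumes "\<And>x. x \<in> \<Theta> \<times> UNIV \<Longrightarrow> H x = K x"
  shows "separately_lipschitz \<Theta> Lp Ls H \<longleftrightarrow> separately_lipschitz \<Theta> Lp Ls K"
  using assms by (simp add: separately_lipschitz_def)

lemma separately_lipschitz_mono:
  assumes H: "separately_lipschitz \<Theta> Lp Ls H" and "Lp \<le> Lp'" "Ls \<le> Ls'"
  shows "separately_lipschitz \<Theta> Lp' Ls' H"
proof (rule separately_lipschitzI)
  fix \<theta> \<theta>' s assume "\<theta> \<in> \<Theta>" "\<theta>' \<in> \<Theta>"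
  then show "dist (H (\<theta>, s)) (H (\<theta>', s)) \<le> Lp' * dist \<theta> \<theta>'"
    using separately_lipschitzD(1)[OF H] mult_right_mono[OF \<open>Lp \<le> Lp'\<close> zero_le_dist[of \<theta> \<theta>']]
    by (meson order_trans)
next
  fix \<theta> s s' assume "\<theta> \<in> \<Theta>"
  then show "dist (H (\<theta>, s)) (H (\<theta>, s')) \<le> Ls' * dist s s'"
    using separately_lipschitzD(2)[OF H] mult_right_mono[OF \<open>Ls \<le> Ls'\<close> zero_le_dist[of s s']]
    by (meson order_trans)
qed

lemma separately_lipschitz_const: "separately_lipschitz \<Theta> 0 0 (\<lambda>x. c)"
  by (simp add: separately_lipschitz_def)

lemma separately_lipschitz_add:
  fixes H K :: "'p::metric_space \<times> 's::metric_space \<Rightarrow> 'y::real_normed_vector"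
  assumes H: "separately_lipschitz \<Theta> Lp Ls H" and K: "separately_lipschitz \<Theta> Lp' Ls' K"
  shows "separately_lipschitz \<Theta> (Lp + Lp') (Ls + Ls') (\<lambda>x. H x + K x)"
proof (rule separately_lipschitzI)
  fix \<theta> \<theta>' s assume "\<theta> \<in> \<Theta>" "\<theta>' \<in> \<Theta>"
  then show "dist (H (\<theta>, s) + K (\<theta>, s)) (H (\<theta>', s) + K (\<theta>', s)) \<le> (Lp + Lp') * dist \<theta> \<theta>'"
    using separately_lipschitzD(1)[OF H] separately_lipschitzD(1)[OF K] dist_triangle_add
    by (smt (verit) distrib_right)
next
  fix \<theta> s s' assume "\<theta> \<in> \<Theta>"
  then show "dist (H (\<theta>, s) + K (\<theta>, s)) (H (\<theta>, s') + K (\<theta>, s')) \<le> (Ls + Ls') * dist s s'"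
    using separately_lipschitzD(2)[OF H] separately_lipschitzD(2)[OF K] dist_triangle_add
    by (smt (verit) distrib_right)
qed

lemma separately_lipschitz_fst:
  assumes "separately_lipschitz \<Theta> Lp Ls H"
  shows "separately_lipschitz \<Theta> Lp Ls (\<lambda>x. fst (H x))"
  using separately_lipschitzD[OF assms] dist_fst_le order_trans
  by (intro separately_lipschitzI) blast+

lemma separately_lipschitz_snd:
  assumes "separately_lipschitz \<Theta> Lp Ls H"
  shows "separately_lipschitz \<Theta> Lp Ls (\<lambda>x. snd (H x))"
  using separately_lipschitzD[OF assms] dist_snd_le order_trans
  by (intro separately_lipschitzI) blast+

lemma separately_lipschitz_imp_lipschitz:
  assumes "separately_lipschitz \<Theta> Lp Ls H" "0 \<le> Lp" "0 \<le> Ls"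
    and "x \<in> \<Theta> \<times> UNIV" "y \<in> \<Theta> \<times> UNIV"
  shows "dist (H x) (H y) \<le> (Lp + Ls) * dist x y"
proof -
  obtain \<theta> s \<theta>' s' where xy: "x = (\<theta>, s)" "y = (\<theta>', s')" "\<theta> \<in> \<Theta>" "\<theta>' \<in> \<Theta>"
    using assms(4,5) by auto
  have "dist (H x) (H y) \<le> dist (H (\<theta>, s)) (H (\<theta>', s)) + dist (H (\<theta>', s)) (H (\<theta>', s'))"
    using xy dist_triangle by blast
  also have "\<dots> \<le> Lp * dist \<theta> \<theta>' + Ls * dist s s'"
    using separately_lipschitzD[OF assms(1)] xy by (meson add_mono)
  also have "\<dots> \<le> Lp * dist x y + Ls * dist x y"
    using dist_fst_le[of x y] dist_snd_le[of x y] assms(2,3) xy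
    by (intro add_mono mult_left_mono) auto
  finally show ?thesis by (simp add: distrib_right)
qed

lemma separately_lipschitz_adjoint:
  fixes A :: "'p::metric_space \<times> 's::metric_space \<Rightarrow> 'a::euclidean_space \<Rightarrow>\<^sub>L 'b::euclidean_space"
  assumes A: "\<And>x. x \<in> \<Theta> \<times> UNIV \<Longrightarrow> norm (A x) \<le> l"
      "\<And>x y. x \<in> \<Theta> \<times> UNIV \<Longrightarrow> y \<in> \<Theta> \<times> UNIV \<Longrightarrow> norm (A x - A y) \<le> l * dist x y"
    and v: "\<And>x. x \<in> \<Theta> \<times> UNIV \<Longrightarrow> norm (v x) \<le> S" "separately_lipschitz \<Theta> Lp Ls v"
  shows "separately_lipschitz \<Theta> (l * Lp + l * S) (l * Ls + l * S) (\<lambda>x. adjoint (A x) (v x))"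
proof -
  have l: "0 \<le> l" if "\<theta> \<in> \<Theta>" for \<theta>
    using order_trans[OF norm_ge_zero A(1)] that by (meson SigmaI UNIV_I)
  have key: "dist (adjoint (A x) (v x)) (adjoint (A y) (v y)) \<le> l * dist (v x) (v y) + l * dist x y * S"
    if "x \<in> \<Theta> \<times> UNIV" "y \<in> \<Theta> \<times> UNIV" for x y
  proof -
    have "adjoint (A x) (v x) - adjoint (A y) (v y) = adjoint (A x) (v x - v y) + adjoint (A x - A y) (v y)"
      by (simp add: adjoint_blinfun_diff linear_diff[OF adjoint_linear]
            bounded_linear.linear[OF blinfun.bounded_linear_right])
    then have "dist (adjoint (A x) (v x)) (adjoint (A y) (v y))
        \<le> norm (adjoint (A x) (v x - v y)) + norm (adjoint (A x - A y) (v y))"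
      by (metis dist_norm norm_triangle_ineq)
    also have "\<dots> \<le> norm (A x) * dist (v x) (v y) + norm (A x - A y) * norm (v y)"
      by (intro add_mono) (simp_all add: dist_norm norm_adjoint_blinfun_le)
    also have "\<dots> \<le> l * dist (v x) (v y) + l * dist x y * S"
      using A(1)[OF that(1)] A(2)[OF that] v(1)[OF that(2)] l[of "fst x"] that(1)
      by (intro add_mono mult_right_mono mult_mono) auto
    finally show ?thesis .
  qed
  show ?thesis
  proof (rule separately_lipschitzI)
    fix \<theta> \<theta>' s assume \<theta>: "\<theta> \<in> \<Theta>" "\<theta>' \<in> \<Theta>"
    have "dist (adjoint (A (\<theta>, s)) (v (\<theta>, s))) (adjoint (A (\<theta>', s)) (v (\<theta>', s)))
        \<le> l * dist (v (\<theta>, s)) (v (\<theta>', s)) + l * dist \<theta> \<theta>' * S"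
      using key[of "(\<theta>, s)" "(\<theta>', s)"] \<theta> by (simp add: dist_Pair_Pair)
    also have "\<dots> \<le> l * (Lp * dist \<theta> \<theta>') + l * dist \<theta> \<theta>' * S"
      using separately_lipschitzD(1)[OF v(2) \<theta>] l[OF \<theta>(1)] by (intro add_mono mult_left_mono) auto
    finally show "dist (adjoint (A (\<theta>, s)) (v (\<theta>, s))) (adjoint (A (\<theta>', s)) (v (\<theta>', s)))
        \<le> (l * Lp + l * S) * dist \<theta> \<theta>'"
      by (simp add: algebra_simps)
  next
    fix \<theta> s s' assume \<theta>: "\<theta> \<in> \<Theta>"
    have "dist (adjoint (A (\<theta>, s)) (v (\<theta>, s))) (adjoint (A (\<theta>, s')) (v (\<theta>, s')))
        \<le> l * dist (v (\<theta>, s)) (v (\<theta>, s')) + l * dist s s' * S"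
      using key[of "(\<theta>, s)" "(\<theta>, s')"] \<theta> by (simp add: dist_Pair_Pair)
    also have "\<dots> \<le> l * (Ls * dist s s') + l * dist s s' * S"
      using separately_lipschitzD(2)[OF v(2) \<theta>] l[OF \<theta>] by (intro add_mono mult_left_mono) auto
    finally show "dist (adjoint (A (\<theta>, s)) (v (\<theta>, s))) (adjoint (A (\<theta>, s')) (v (\<theta>, s')))
        \<le> (l * Ls + l * S) * dist s s'"
      by (simp add: algebra_simps)
  qed
qed

lemma separately_lipschitz_Pair:
  fixes G :: "'p::metric_space \<times> 's::metric_space \<Rightarrow> 'a::metric_space \<times> 'b::metric_space"
  assumes "separately_lipschitz \<Theta> Lp Ls (\<lambda>x. fst (G x))"
    and "separately_lipschitz \<Theta> Lp' Ls' (\<lambda>x. snd (G x))"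
  shows "separately_lipschitz \<Theta> (Lp + Lp') (Ls + Ls') G"
proof -
  have dist_le: "dist u v \<le> dist (fst u) (fst v) + dist (snd u) (snd v)" for u v :: "'a \<times> 'b"
    by (simp add: dist_prod_def sqrt_sum_squares_le_sum)
  show ?thesis
    using separately_lipschitzD[OF assms(1)] separately_lipschitzD[OF assms(2)]
    by (intro separately_lipschitzI; smt (verit, best) dist_le distrib_right)
qed

lemma separately_lipschitz_expectation:
  fixes H :: "'p::metric_space \<times> 's::real_normed_vector \<Rightarrow> 'y::{banach,second_countable_topology}"
  assumes "prob_space p"
    and H: "separately_lipschitz \<Theta> Lp Ls H" "0 \<le> Ls"
    and f: "\<And>x y. x \<in> \<Theta> \<times> UNIV \<Longrightarrow> y \<in> \<Theta> \<times> UNIV \<Longrightarrow> dist (f x) (f y) \<le> l * dist x y"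
    and int: "\<And>x. x \<in> \<Theta> \<times> UNIV \<Longrightarrow> integrable p (\<lambda>z. H (fst x, f x + z))"
  shows "separately_lipschitz \<Theta> (Lp + Ls * l) (Ls * l) (\<lambda>x. \<integral>z. H (fst x, f x + z) \<partial>p)"
proof (rule separately_lipschitzI)
  fix \<theta> \<theta>' s assume \<theta>: "\<theta> \<in> \<Theta>" "\<theta>' \<in> \<Theta>"
  show "dist (\<integral>z. H (fst (\<theta>, s), f (\<theta>, s) + z) \<partial>p) (\<integral>z. H (fst (\<theta>', s), f (\<theta>', s) + z) \<partial>p)
      \<le> (Lp + Ls * l) * dist \<theta> \<theta>'"
  proof (rule prob_space.dist_integral_le_const[OF \<open>prob_space p\<close>])
    show "integrable p (\<lambda>z. H (fst (\<theta>, s), f (\<theta>, s) + z))"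
      and "integrable p (\<lambda>z. H (fst (\<theta>', s), f (\<theta>', s) + z))" using int \<theta> by auto
    fix z
    have "dist (H (\<theta>, f (\<theta>, s) + z)) (H (\<theta>', f (\<theta>', s) + z))
        \<le> dist (H (\<theta>, f (\<theta>, s) + z)) (H (\<theta>', f (\<theta>, s) + z))
          + dist (H (\<theta>', f (\<theta>, s) + z)) (H (\<theta>', f (\<theta>', s) + z))"
      by (rule dist_triangle)
    also have "\<dots> \<le> Lp * dist \<theta> \<theta>' + Ls * dist (f (\<theta>, s)) (f (\<theta>', s))"
      using separately_lipschitzD(1)[OF H(1) \<theta>, of "f (\<theta>, s) + z"]
        separately_lipschitzD(2)[OF H(1) \<theta>(2), of "f (\<theta>, s) + z" "f (\<theta>', s) + z"]
      by (simp add: dist_add_cancel2)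
    also have "\<dots> \<le> Lp * dist \<theta> \<theta>' + Ls * (l * dist \<theta> \<theta>')"
      using f[of "(\<theta>, s)" "(\<theta>', s)"] \<theta> H(2) by (intro add_left_mono mult_left_mono) (auto simp: dist_Pair_Pair)
    finally show "dist (H (fst (\<theta>, s), f (\<theta>, s) + z)) (H (fst (\<theta>', s), f (\<theta>', s) + z))
        \<le> (Lp + Ls * l) * dist \<theta> \<theta>'"
      by (simp add: algebra_simps)
  qed
next
  fix \<theta> s s' assume \<theta>: "\<theta> \<in> \<Theta>"
  show "dist (\<integral>z. H (fst (\<theta>, s), f (\<theta>, s) + z) \<partial>p) (\<integral>z. H (fst (\<theta>, s'), f (\<theta>, s') + z) \<partial>p)
      \<le> Ls * l * dist s s'"
  proof (rule prob_space.dist_integral_le_const[OF \<open>prob_space p\<close>])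
    show "integrable p (\<lambda>z. H (fst (\<theta>, s), f (\<theta>, s) + z))"
      and "integrable p (\<lambda>z. H (fst (\<theta>, s'), f (\<theta>, s') + z))" using int \<theta> by auto
    fix z
    have "dist (H (\<theta>, f (\<theta>, s) + z)) (H (\<theta>, f (\<theta>, s') + z)) \<le> Ls * dist (f (\<theta>, s)) (f (\<theta>, s'))"
      using separately_lipschitzD(2)[OF H(1) \<theta>, of "f (\<theta>, s) + z" "f (\<theta>, s') + z"]
      by (simp add: dist_add_cancel2)
    also have "\<dots> \<le> Ls * (l * dist s s')"
      using f[of "(\<theta>, s)" "(\<theta>, s')"] \<theta> H(2) by (intro mult_left_mono) (auto simp: dist_Pair_Pair)
    finally show "dist (H (fst (\<theta>, s), f (\<theta>, s) + z)) (H (fst (\<theta>, s'), f (\<theta>, s') + z)) \<le> Ls * l * dist s s'"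
      by (simp add: mult.assoc)
  qed
qed

(* Bounds for a gradient G = (G_th, G_s) of the n-step value function, with l = bar L_f and r = bar L_R:
   state_grad_bound bounds |G_s|; lip_ss is the Lipschitz constant of G_s in s; lip_ps that of G_th in
   s and of G_s in th (both obey the same recursion); lip_pp that of G_th in th. *)
primrec state_grad_bound :: "real \<Rightarrow> real \<Rightarrow> nat \<Rightarrow> real" where
  "state_grad_bound l r 0 = 0"
| "state_grad_bound l r (Suc n) = r + l * state_grad_bound l r n"

primrec lip_ss :: "real \<Rightarrow> real \<Rightarrow> nat \<Rightarrow> real" where
  "lip_ss l r 0 = 0"
| "lip_ss l r (Suc n) = r + l\<^sup>2 * lip_ss l r n + l * state_grad_bound l r n"

primrec lip_ps :: "real \<Rightarrow> real \<Rightarrow> nat \<Rightarrow> real" where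
  "lip_ps l r 0 = 0"
| "lip_ps l r (Suc n) = r + l * lip_ps l r n + l\<^sup>2 * lip_ss l r n + l * state_grad_bound l r n"

primrec lip_pp :: "real \<Rightarrow> real \<Rightarrow> nat \<Rightarrow> real" where
  "lip_pp l r 0 = 0"
| "lip_pp l r (Suc n) =
     r + lip_pp l r n + 2 * l * lip_ps l r n + l\<^sup>2 * lip_ss l r n + l * state_grad_bound l r n"

lemma lip_constants_nonneg:
  assumes "0 \<le> l" "0 \<le> r"
  shows "0 \<le> state_grad_bound l r n" "0 \<le> lip_ss l r n" "0 \<le> lip_ps l r n" "0 \<le> lip_pp l r n"
proof -
  have "0 \<le> state_grad_bound l r n \<and> 0 \<le> lip_ss l r n \<and> 0 \<le> lip_ps l r n \<and> 0 \<le> lip_pp l r n"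
    using assms by (induction n) auto
  then show "0 \<le> state_grad_bound l r n" "0 \<le> lip_ss l r n" "0 \<le> lip_ps l r n" "0 \<le> lip_pp l r n"
    by auto
qed

lemma lip_constants_le:
  assumes "1 \<le> l" "0 \<le> r"
  shows "state_grad_bound l r n \<le> n * (r * l ^ (2 * n)) \<and> lip_ss l r n \<le> n ^ 2 * (r * l ^ (2 * n))
    \<and> lip_ps l r n \<le> n ^ 3 * (r * l ^ (2 * n)) \<and> lip_pp l r n \<le> n ^ 4 * (r * l ^ (2 * n))"
proof (induction n)
  case 0
  show ?case by simp
next
  case (Suc n)
  define m where "m = real n"
  define w where "w = r * l ^ (2 * n)"
  define w' where "w' = r * l ^ (2 * Suc n)"
  have "0 \<le> m" "0 \<le> w" using assms by (simp_all add: m_def w_def)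
  have l2w: "l\<^sup>2 * w = w'" by (simp add: w_def w'_def power_add power2_eq_square mult_ac)
  have lw: "l * w \<le> w'"
    using assms \<open>0 \<le> w\<close> l2w mult_right_mono[of 1 l "l * w"] by (simp add: power2_eq_square mult_ac)
  have "w \<le> w'" using assms \<open>0 \<le> w\<close> lw mult_right_mono[of 1 l w] by simp
  have "r \<le> w'" using assms mult_left_mono[OF one_le_power[OF assms(1)], of r "2 * Suc n"]
    by (simp add: w'_def)
  have scale: "k * X \<le> c * w'" if "X \<le> c * w" "0 \<le> k" "k * w \<le> w'" "0 \<le> c" for k X c
  proof -
    have "k * X \<le> c * (k * w)" using mult_left_mono[OF that(1,2)] by (simp add: mult_ac)
    also have "\<dots> \<le> c * w'" using mult_left_mono[OF that(3,4)] .
    finally show ?thesis .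
  qed
  have IH: "state_grad_bound l r n \<le> m * w" "lip_ss l r n \<le> m ^ 2 * w"
    "lip_ps l r n \<le> m ^ 3 * w" "lip_pp l r n \<le> m ^ 4 * w"
    using Suc.IH by (simp_all add: m_def w_def)
  have S: "l * state_grad_bound l r n \<le> m * w'" using scale[OF IH(1) _ lw] assms \<open>0 \<le> m\<close> by simp
  have A: "l\<^sup>2 * lip_ss l r n \<le> m ^ 2 * w'" using scale[OF IH(2)] l2w by simp
  have B: "l * lip_ps l r n \<le> m ^ 3 * w'" using scale[OF IH(3) _ lw] assms \<open>0 \<le> m\<close> by simp
  have C: "lip_pp l r n \<le> m ^ 4 * w'" using scale[OF IH(4), of 1] \<open>w \<le> w'\<close> \<open>0 \<le> m\<close> by simp
  have "0 \<le> w'" using \<open>r \<le> w'\<close> assms by simp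
  have poly: "1 + m\<^sup>2 + m \<le> (1 + m)\<^sup>2" "1 + m ^ 3 + m\<^sup>2 + m \<le> (1 + m) ^ 3"
    "1 + m ^ 4 + 2 * m ^ 3 + m\<^sup>2 + m \<le> (1 + m) ^ 4"
    using \<open>0 \<le> m\<close> by (simp_all add: power2_eq_square power3_eq_cube power4_eq_xxxx algebra_simps)
  have "real (Suc n) = 1 + m" by (simp add: m_def)
  then show ?case
    using \<open>r \<le> w'\<close> S A B C mult_right_mono[OF poly(1) \<open>0 \<le> w'\<close>]
      mult_right_mono[OF poly(2) \<open>0 \<le> w'\<close>] mult_right_mono[OF poly(3) \<open>0 \<le> w'\<close>]
    unfolding w'_def[symmetric] by (simp add: algebra_simps)
qed

lemma lip_sum_le:
  assumes "1 \<le> l" "0 \<le> r" "n \<le> T"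
  shows "lip_pp l r n + lip_ps l r n + (lip_ps l r n + lip_ss l r n)
    \<le> 44 * real T ^ 5 * r * l powr (4 * (real n - 1))"
proof (cases "n \<le> 1")
  case True
  then consider "n = 0" | "n = 1" by linarith
  then show ?thesis
  proof cases
    case 1
    then show ?thesis using assms by simp
  next
    case 2
    have "r \<le> real T ^ 5 * r"
      using 2 assms mult_right_mono[of 1 "real T ^ 5" r] by (simp add: one_le_power)
    then have "4 * r \<le> 44 * real T ^ 5 * r" using assms by linarith
    then show ?thesis using 2 assms(1) by simp
  qed
next
  case False
  have "1 \<le> real n" "real n \<le> real T" using False assms(3) by simp_all
  then have "real n ^ 2 \<le> real n ^ 4" "real n ^ 3 \<le> real n ^ 4" "real n ^ 4 \<le> real n ^ 5"
    "real n ^ 5 \<le> real T ^ 5" "0 \<le> real n ^ 5"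
    by (simp_all add: power_increasing power_mono)
  then have poly: "real n ^ 4 + real n ^ 3 + real n ^ 3 + real n ^ 2 \<le> 44 * real T ^ 5" by linarith
  have "lip_pp l r n + lip_ps l r n + (lip_ps l r n + lip_ss l r n)
      \<le> (real n ^ 4 + real n ^ 3 + real n ^ 3 + real n ^ 2) * (r * l ^ (2 * n))"
    using lip_constants_le[OF assms(1,2), of n] by (simp add: algebra_simps)
  also have "\<dots> \<le> 44 * real T ^ 5 * (r * l ^ (4 * (n - 1)))"
  proof (rule mult_mono[OF poly])
    have "l ^ (2 * n) \<le> l ^ (4 * (n - 1))" using False assms(1) by (intro power_increasing) auto
    then show "r * l ^ (2 * n) \<le> r * l ^ (4 * (n - 1))" using assms(2) by (rule mult_left_mono)
  qed (use assms in simp_all)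
  also have "l ^ (4 * (n - 1)) = l powr (4 * (real n - 1))"
    using False assms(1) powr_realpow[of l "4 * (n - 1)"] by (simp add: of_nat_diff)
  finally show ?thesis by (simp add: mult_ac)
qed

locale value_function_regularity =
  fixes \<Theta> :: "'th::euclidean_space set" and fth :: "'th \<times> 's::euclidean_space \<Rightarrow> 's"
    and Rth :: "'th \<times> 's \<Rightarrow> real" and p :: "'s measure" and N :: nat
    and Df :: "'th \<times> 's \<Rightarrow> ('th \<times> 's) \<Rightarrow>\<^sub>L 's" and DR :: "'th \<times> 's \<Rightarrow> ('th \<times> 's) \<Rightarrow>\<^sub>L real"
    and Lf LDf LR LDR :: real
  assumes Theta_open: "open \<Theta>"
    and prob: "prob_space p" and sets_p: "sets p = sets borel"
    and integrable_Wv: "\<And>n x. n < N \<Longrightarrow> x \<in> \<Theta> \<times> UNIV \<Longrightarrow>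
          integrable p (\<lambda>z. Wv fth Rth p n (fst x, fth x + z))"
    and f_lip: "\<forall>x\<in>\<Theta> \<times> UNIV. \<forall>y\<in>\<Theta> \<times> UNIV. dist (fth x) (fth y) \<le> Lf * dist x y"
    and f_deriv: "\<forall>x\<in>\<Theta> \<times> UNIV. (fth has_derivative blinfun_apply (Df x)) (at x)"
    and Df_lip: "\<forall>x\<in>\<Theta> \<times> UNIV. \<forall>y\<in>\<Theta> \<times> UNIV. frob (Df x - Df y) \<le> LDf * dist x y"
    and R_lip: "\<forall>x\<in>\<Theta> \<times> UNIV. \<forall>y\<in>\<Theta> \<times> UNIV. dist (Rth x) (Rth y) \<le> LR * dist x y"
    and R_deriv: "\<forall>x\<in>\<Theta> \<times> UNIV. (Rth has_derivative blinfun_apply (DR x)) (at x)"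
    and DR_lip: "\<forall>x\<in>\<Theta> \<times> UNIV. \<forall>y\<in>\<Theta> \<times> UNIV. frob (DR x - DR y) \<le> LDR * dist x y"
begin

abbreviation D :: "('th \<times> 's) set" where "D \<equiv> \<Theta> \<times> UNIV"

abbreviation Lf_bar :: real where "Lf_bar \<equiv> Lbar LDf Lf"

abbreviation LR_bar :: real where "LR_bar \<equiv> Lbar LDR LR"

lemma Lf_bar_ge: "1 \<le> Lf_bar" "Lf \<le> Lf_bar" "LDf \<le> Lf_bar"
  and LR_bar_ge: "1 \<le> LR_bar" "LR \<le> LR_bar" "LDR \<le> LR_bar"
  by (auto simp: Lbar_def)

lemma fth_lipschitz: "x \<in> D \<Longrightarrow> y \<in> D \<Longrightarrow> dist (fth x) (fth y) \<le> Lf_bar * dist x y"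
  using f_lip le_mult_dist_mono[OF _ Lf_bar_ge(2)] by blast

lemma Rth_lipschitz: "x \<in> D \<Longrightarrow> y \<in> D \<Longrightarrow> dist (Rth x) (Rth y) \<le> LR_bar * dist x y"
  using R_lip le_mult_dist_mono[OF _ LR_bar_ge(2)] by blast

lemma Df_lipschitz: "x \<in> D \<Longrightarrow> y \<in> D \<Longrightarrow> norm (Df x - Df y) \<le> Lf_bar * dist x y"
  using Df_lip order_trans[OF norm_blinfun_le_frob le_mult_dist_mono[OF _ Lf_bar_ge(3)]] by blast

lemma DR_lipschitz: "x \<in> D \<Longrightarrow> y \<in> D \<Longrightarrow> norm (DR x - DR y) \<le> LR_bar * dist x y"
  using DR_lip order_trans[OF norm_blinfun_le_frob le_mult_dist_mono[OF _ LR_bar_ge(3)]] by blast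

lemma norm_Df_le: "x \<in> D \<Longrightarrow> norm (Df x) \<le> Lf_bar"
  using Theta_open f_deriv fth_lipschitz Lf_bar_ge(1)
  by (intro norm_derivative_le_lipschitz[where g = fth and S = D]) (auto simp: open_Times)

lemma norm_DR_le: "x \<in> D \<Longrightarrow> norm (DR x) \<le> LR_bar"
  using Theta_open R_deriv Rth_lipschitz LR_bar_ge(1)
  by (intro norm_derivative_le_lipschitz[where g = Rth and S = D]) (auto simp: open_Times)

lemma integrable_shifted:
  fixes H :: "'th \<times> 's \<Rightarrow> 'y::{banach,second_countable_topology}"
  assumes "\<And>x y. x \<in> D \<Longrightarrow> y \<in> D \<Longrightarrow> dist (H x) (H y) \<le> L * dist x y" "0 \<le> L"
    and "bounded (H ` D)" "x \<in> D"
  shows "integrable p (\<lambda>z. H (fst x, fth x + z))"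
proof -
  interpret prob_space p by (rule prob)
  obtain B where B: "\<And>y. y \<in> D \<Longrightarrow> norm (H y) \<le> B" using assms(3) by (auto simp: bounded_iff)
  have "continuous_on D H"
    using assms(1,2) by (intro lipschitz_on_continuous_on[where L = L]) (simp add: lipschitz_on_def)
  then have "continuous_on UNIV (\<lambda>z. H (fst x, fth x + z))"
    by (rule continuous_on_compose2) (use assms(4) in \<open>auto intro!: continuous_intros\<close>)
  then have "(\<lambda>z. H (fst x, fth x + z)) \<in> borel_measurable p"
    by (simp add: measurable_cong_sets[OF sets_p refl] borel_measurable_continuous_onI)
  then show ?thesis
    using B assms(4) by (intro integrable_const_bound[where B = B]) (auto simp: mem_Times_iff)
qed

lemma shifted_remainder_le:
  assumes W: "\<And>y. y \<in> D \<Longrightarrow> (W has_derivative (\<lambda>h. G y \<bullet> h)) (at y)"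
    and G: "\<And>x y. x \<in> D \<Longrightarrow> y \<in> D \<Longrightarrow> dist (G x) (G y) \<le> K * dist x y" "0 \<le> K"
    and B: "\<And>y. y \<in> D \<Longrightarrow> norm (G y) \<le> B"
    and S: "convex S" "S \<subseteq> \<Theta>" "fst x \<in> S" "fst y \<in> S"
  shows "\<bar>W (fst y, fth y + z) - W (fst x, fth x + z) - G (fst x, fth x + z) \<bullet> (fst (y - x), Df x (y - x))\<bar>
    \<le> K * (1 + Lf_bar)\<^sup>2 * (norm (y - x))\<^sup>2 + B * norm (fth y - fth x - Df x (y - x))"
proof -
  define a b where "a = (fst x, fth x + z)" and "b = (fst y, fth y + z)"
  have "x \<in> D" "y \<in> D" "a \<in> D" using S by (auto simp: a_def mem_Times_iff)
  have "closed_segment a b \<subseteq> S \<times> UNIV"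
    using S by (intro closed_segment_subset convex_Times) (auto simp: a_def b_def)
  then have rem: "\<bar>W b - W a - G a \<bullet> (b - a)\<bar> \<le> K * (norm (b - a))\<^sup>2"
    using S(2) G \<open>a \<in> D\<close> by (intro taylor_remainder_le_lipschitz_gradient[OF _ W]) auto
  have "norm (b - a) \<le> norm (fst y - fst x) + norm (fth y - fth x)"
    using norm_Pair_le[of "fst y - fst x" "fth y - fth x"] by (simp add: a_def b_def)
  also have "\<dots> \<le> norm (y - x) + Lf_bar * norm (y - x)"
    using dist_fst_le[of y x] fth_lipschitz[OF \<open>y \<in> D\<close> \<open>x \<in> D\<close>] by (simp add: dist_norm)
  finally have "(norm (b - a))\<^sup>2 \<le> ((1 + Lf_bar) * norm (y - x))\<^sup>2"
    by (intro power_mono) (auto simp: algebra_simps)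
  then have rem': "\<bar>W b - W a - G a \<bullet> (b - a)\<bar> \<le> K * (1 + Lf_bar)\<^sup>2 * (norm (y - x))\<^sup>2"
    using rem mult_left_mono[OF _ G(2)] by (fastforce simp: power_mult_distrib mult_ac)
  have "\<bar>G a \<bullet> (0, fth y - fth x - Df x (y - x))\<bar> \<le> B * norm (fth y - fth x - Df x (y - x))"
    using Cauchy_Schwarz_ineq2[of "G a" "(0, fth y - fth x - Df x (y - x))"] B[OF \<open>a \<in> D\<close>]
    by (simp add: norm_Pair) (meson mult_right_mono norm_ge_zero order_trans)
  moreover have "b - a = (fst (y - x), Df x (y - x)) + (0, fth y - fth x - Df x (y - x))"
    by (simp add: a_def b_def)
  then have "G a \<bullet> (b - a) = G a \<bullet> (fst (y - x), Df x (y - x)) + G a \<bullet> (0, fth y - fth x - Df x (y - x))"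
    by (simp only: inner_add_right)
  ultimately show ?thesis
    using rem' unfolding a_def[symmetric] b_def[symmetric] by linarith
qed

(* The remainder bound of shifted_remainder_le is uniform in the noise, so it survives integration. *)
lemma has_derivative_expectation:
  assumes W: "\<And>y. y \<in> D \<Longrightarrow> (W has_derivative (\<lambda>h. G y \<bullet> h)) (at y)"
    and G: "\<And>x y. x \<in> D \<Longrightarrow> y \<in> D \<Longrightarrow> dist (G x) (G y) \<le> K * dist x y" "0 \<le> K"
      "bounded (G ` D)"
    and W_int: "\<And>y. y \<in> D \<Longrightarrow> integrable p (\<lambda>z. W (fst y, fth y + z))"
    and "x \<in> D"
  shows "((\<lambda>y. \<integral>z. W (fst y, fth y + z) \<partial>p) has_derivative
          (\<lambda>h. (\<integral>z. G (fst x, fth x + z) \<partial>p) \<bullet> (fst h, Df x h))) (at x)"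
proof -
  let ?F = "\<lambda>y. \<integral>z. W (fst y, fth y + z) \<partial>p"
  let ?L = "\<lambda>h. (\<integral>z. G (fst x, fth x + z) \<partial>p) \<bullet> (fst h, Df x h)"
  let ?rf = "\<lambda>y. norm (fth y - fth x - Df x (y - x))"
  obtain B where B: "\<And>y. y \<in> D \<Longrightarrow> norm (G y) \<le> B" using G(3) by (auto simp: bounded_iff)
  obtain \<rho> where "\<rho> > 0" and \<rho>: "ball (fst x) \<rho> \<subseteq> \<Theta>"
    using Theta_open \<open>x \<in> D\<close> open_contains_ball by (metis mem_Times_iff)
  have G_int: "integrable p (\<lambda>z. G (fst y, fth y + z))" if "y \<in> D" for y
    using integrable_shifted[OF G that] .
  have rem: "norm (?F y - ?F x - ?L (y - x)) \<le> K * (1 + Lf_bar)\<^sup>2 * (norm (y - x))\<^sup>2 + B * ?rf y"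
    if "dist y x < \<rho>" for y
  proof -
    have "fst y \<in> ball (fst x) \<rho>" using that dist_fst_le[of y x] by (auto simp: dist_commute)
    then have "y \<in> D" using \<rho> by (auto simp: mem_Times_iff)
    have "?F y - ?F x - ?L (y - x) = (\<integral>z. W (fst y, fth y + z) - W (fst x, fth x + z)
        - G (fst x, fth x + z) \<bullet> (fst (y - x), Df x (y - x)) \<partial>p)"
      using W_int G_int \<open>x \<in> D\<close> \<open>y \<in> D\<close> by simp
    also have "norm \<dots> \<le> K * (1 + Lf_bar)\<^sup>2 * (norm (y - x))\<^sup>2 + B * ?rf y"
    proof (rule prob_space.norm_integral_le_const[OF prob])
      show "integrable p (\<lambda>z. W (fst y, fth y + z) - W (fst x, fth x + z)
          - G (fst x, fth x + z) \<bullet> (fst (y - x), Df x (y - x)))"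
        using W_int G_int \<open>x \<in> D\<close> \<open>y \<in> D\<close> by auto
      fix z
      show "norm (W (fst y, fth y + z) - W (fst x, fth x + z)
          - G (fst x, fth x + z) \<bullet> (fst (y - x), Df x (y - x)))
          \<le> K * (1 + Lf_bar)\<^sup>2 * (norm (y - x))\<^sup>2 + B * ?rf y"
        using shifted_remainder_le[OF W G(1,2) B convex_ball \<rho> _ \<open>fst y \<in> ball (fst x) \<rho>\<close>] \<open>\<rho> > 0\<close>
        by simp
    qed
    finally show ?thesis .
  qed
  have "((\<lambda>y. norm (?F y - ?F x - ?L (y - x)) / norm (y - x)) \<longlongrightarrow> 0) (at x)"
  proof (rule Lim_null_comparison)
    show "\<forall>\<^sub>F y in at x. norm (norm (?F y - ?F x - ?L (y - x)) / norm (y - x))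
        \<le> K * (1 + Lf_bar)\<^sup>2 * norm (y - x) + B * (?rf y / norm (y - x))"
      unfolding eventually_at
    proof (intro exI[of _ \<rho>] conjI \<open>\<rho> > 0\<close> ballI impI)
      fix y assume y: "y \<noteq> x \<and> dist y x < \<rho>"
      then have "norm (?F y - ?F x - ?L (y - x)) / norm (y - x)
          \<le> (K * (1 + Lf_bar)\<^sup>2 * (norm (y - x))\<^sup>2 + B * ?rf y) / norm (y - x)"
        using rem by (intro divide_right_mono) auto
      also have "\<dots> = K * (1 + Lf_bar)\<^sup>2 * norm (y - x) + B * (?rf y / norm (y - x))"
        using y by (simp add: field_simps power2_eq_square)
      finally show "norm (norm (?F y - ?F x - ?L (y - x)) / norm (y - x))
          \<le> K * (1 + Lf_bar)\<^sup>2 * norm (y - x) + B * (?rf y / norm (y - x))" by simp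
    qed
    have "((\<lambda>y. ?rf y / norm (y - x)) \<longlongrightarrow> 0) (at x)"
      using f_deriv \<open>x \<in> D\<close> unfolding has_derivative_iff_norm by blast
    moreover have "((\<lambda>y. norm (y - x)) \<longlongrightarrow> 0) (at x)"
      by (intro tendsto_eq_intros) auto
    ultimately show "((\<lambda>y. K * (1 + Lf_bar)\<^sup>2 * norm (y - x) + B * (?rf y / norm (y - x))) \<longlongrightarrow> 0) (at x)"
      by (intro tendsto_add_zero tendsto_mult_right_zero)
  qed
  moreover have "bounded_linear ?L"
    by (intro bounded_linear_compose[OF bounded_linear_inner_right] bounded_linear_Pair
        bounded_linear_fst blinfun.bounded_linear_right)
  ultimately show ?thesis by (simp add: has_derivative_iff_norm)
qed

definition expected_gradient :: "('th \<times> 's \<Rightarrow> 'th \<times> 's) \<Rightarrow> 'th \<times> 's \<Rightarrow> 'th \<times> 's" where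
  "expected_gradient G x = (\<integral>z. G (fst x, fth x + z) \<partial>p)"

(* Chain rule through (th, s) |-> (th, f(th, s) + zeta); adjoint (DR x) 1 is the gradient of R. *)
definition next_gradient :: "('th \<times> 's \<Rightarrow> 'th \<times> 's) \<Rightarrow> 'th \<times> 's \<Rightarrow> 'th \<times> 's" where
  "next_gradient G x = adjoint (DR x) 1 + (fst (expected_gradient G x), 0)
     + adjoint (Df x) (snd (expected_gradient G x))"

definition controlled_gradient :: "nat \<Rightarrow> ('th \<times> 's \<Rightarrow> 'th \<times> 's) \<Rightarrow> bool" where
  "controlled_gradient n G \<longleftrightarrow>
     (\<forall>x\<in>D. (Wv fth Rth p n has_derivative (\<lambda>h. G x \<bullet> h)) (at x)) \<and> bounded (G ` D)
     \<and> (\<forall>x\<in>D. norm (snd (G x)) \<le> state_grad_bound Lf_bar LR_bar n)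
     \<and> separately_lipschitz \<Theta> (lip_pp Lf_bar LR_bar n) (lip_ps Lf_bar LR_bar n) (\<lambda>x. fst (G x))
     \<and> separately_lipschitz \<Theta> (lip_ps Lf_bar LR_bar n) (lip_ss Lf_bar LR_bar n) (\<lambda>x. snd (G x))"

lemma controlled_gradient_0: "controlled_gradient 0 (\<lambda>x. 0)"
  by (simp add: controlled_gradient_def separately_lipschitz_def image_constant_conv)

lemma lip_constants_bar_nonneg:
  "0 \<le> state_grad_bound Lf_bar LR_bar n" "0 \<le> lip_ss Lf_bar LR_bar n"
  "0 \<le> lip_ps Lf_bar LR_bar n" "0 \<le> lip_pp Lf_bar LR_bar n"
  using lip_constants_nonneg Lf_bar_ge(1) LR_bar_ge(1) by simp_all

lemma controlled_gradient_lipschitz: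
  assumes "controlled_gradient n G" "x \<in> D" "y \<in> D"
  shows "dist (G x) (G y)
    \<le> (lip_pp Lf_bar LR_bar n + lip_ps Lf_bar LR_bar n + (lip_ps Lf_bar LR_bar n + lip_ss Lf_bar LR_bar n))
      * dist x y"
  using assms lip_constants_bar_nonneg
  by (intro separately_lipschitz_imp_lipschitz separately_lipschitz_Pair)
     (auto simp: controlled_gradient_def)

lemma integrable_controlled_gradient:
  assumes "controlled_gradient n G" "x \<in> D"
  shows "integrable p (\<lambda>z. G (fst x, fth x + z))"
  using assms integrable_shifted[OF controlled_gradient_lipschitz[OF assms(1)]] lip_constants_bar_nonneg
  by (simp add: controlled_gradient_def)

lemma has_derivative_Wv_Suc:
  assumes "controlled_gradient n G" "n < N" "x \<in> D"
  shows "(Wv fth Rth p (Suc n) has_derivative (\<lambda>h. next_gradient G x \<bullet> h)) (at x)"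
proof -
  have E: "((\<lambda>y. \<integral>z. Wv fth Rth p n (fst y, fth y + z) \<partial>p) has_derivative
      (\<lambda>h. expected_gradient G x \<bullet> (fst h, Df x h))) (at x)"
    unfolding expected_gradient_def
    using assms integrable_Wv lip_constants_bar_nonneg
    by (intro has_derivative_expectation[OF _ controlled_gradient_lipschitz[OF assms(1)]])
       (auto simp: controlled_gradient_def)
  have R: "(Rth has_derivative DR x) (at x)" using R_deriv assms(3) by blast
  have "DR x h + expected_gradient G x \<bullet> (fst h, Df x h) = next_gradient G x \<bullet> h" for h
    by (simp add: next_gradient_def inner_add_left adjoint_clauses(2)
        bounded_linear.linear[OF blinfun.bounded_linear_right]) (simp add: inner_prod_def)
  then show ?thesis using has_derivative_add[OF R E] by simp
qed

lemma expected_gradient_components: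
  assumes "controlled_gradient n G" "x \<in> D"
  shows "fst (expected_gradient G x) = (\<integral>z. fst (G (fst x, fth x + z)) \<partial>p)"
    and "snd (expected_gradient G x) = (\<integral>z. snd (G (fst x, fth x + z)) \<partial>p)"
  using integrable_controlled_gradient[OF assms] unfolding expected_gradient_def
  by (simp_all add: integral_bounded_linear[OF bounded_linear_fst]
      integral_bounded_linear[OF bounded_linear_snd])

lemma norm_snd_expected_gradient_le:
  assumes "controlled_gradient n G" "x \<in> D"
  shows "norm (snd (expected_gradient G x)) \<le> state_grad_bound Lf_bar LR_bar n"
  unfolding expected_gradient_components(2)[OF assms]
  using assms integrable_controlled_gradient[OF assms]
  by (intro prob_space.norm_integral_le_const[OF prob])
     (auto simp: controlled_gradient_def mem_Times_iff intro: integrable_bounded_linear[OF bounded_linear_snd])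

lemma norm_adjoint_DR_le: "x \<in> D \<Longrightarrow> norm (adjoint (DR x) 1) \<le> LR_bar"
  using norm_adjoint_blinfun_le[of "DR x" 1] norm_DR_le[of x] by simp

lemma norm_adjoint_Df_expected_gradient_le:
  assumes "controlled_gradient n G" "x \<in> D"
  shows "norm (adjoint (Df x) (snd (expected_gradient G x))) \<le> Lf_bar * state_grad_bound Lf_bar LR_bar n"
  using norm_adjoint_blinfun_le[of "Df x" "snd (expected_gradient G x)"] norm_Df_le[OF assms(2)]
    norm_snd_expected_gradient_le[OF assms] Lf_bar_ge(1)
  by (meson mult_mono norm_ge_zero order_trans zero_le_one)

lemma bounded_next_gradient:
  assumes "controlled_gradient n G"
  shows "bounded (next_gradient G ` D)"
proof -
  obtain B where B: "\<And>y. y \<in> D \<Longrightarrow> norm (G y) \<le> B"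
    using assms unfolding controlled_gradient_def bounded_iff by blast
  have "norm (next_gradient G x) \<le> LR_bar + B + Lf_bar * state_grad_bound Lf_bar LR_bar n"
    if "x \<in> D" for x
  proof -
    let ?E = "expected_gradient G x"
    have "norm ?E \<le> B"
      unfolding expected_gradient_def using B that integrable_controlled_gradient[OF assms that]
      by (intro prob_space.norm_integral_le_const[OF prob]) (auto simp: mem_Times_iff)
    then have "norm (fst ?E, 0::'s) \<le> B" using norm_fst_le[of "fst ?E" "snd ?E"] by simp
    then show ?thesis
      using norm_adjoint_DR_le[OF that] norm_adjoint_Df_expected_gradient_le[OF assms that]
      unfolding next_gradient_def by (smt (verit) norm_triangle_ineq)
  qed
  then show ?thesis by (auto simp: bounded_iff)
qed

lemma separately_lipschitz_next_gradient:
  assumes G: "controlled_gradient n G"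
  shows "separately_lipschitz \<Theta> (lip_pp Lf_bar LR_bar (Suc n)) (lip_ps Lf_bar LR_bar (Suc n))
           (\<lambda>x. fst (next_gradient G x))"
    and "separately_lipschitz \<Theta> (lip_ps Lf_bar LR_bar (Suc n)) (lip_ss Lf_bar LR_bar (Suc n))
           (\<lambda>x. snd (next_gradient G x))"
proof -
  let ?l = Lf_bar and ?r = LR_bar
  let ?S = "state_grad_bound ?l ?r n" and ?a = "lip_ss ?l ?r n" and ?b = "lip_ps ?l ?r n"
    and ?c = "lip_pp ?l ?r n"
  have "0 \<le> ?a" "0 \<le> ?b" using lip_constants_bar_nonneg by simp_all
  have G_lip: "separately_lipschitz \<Theta> ?c ?b (\<lambda>x. fst (G x))" "separately_lipschitz \<Theta> ?b ?a (\<lambda>x. snd (G x))"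
    using G by (simp_all add: controlled_gradient_def)
  have int: "integrable p (\<lambda>z. fst (G (fst x, fth x + z)))" "integrable p (\<lambda>z. snd (G (fst x, fth x + z)))"
    if "x \<in> D" for x
    using integrable_controlled_gradient[OF G that]
    by (simp_all add: integrable_bounded_linear[OF bounded_linear_fst] integrable_bounded_linear[OF bounded_linear_snd])
  have E1: "separately_lipschitz \<Theta> (?c + ?b * ?l) (?b * ?l) (\<lambda>x. fst (expected_gradient G x))"
    by (rule separately_lipschitz_cong[THEN iffD1, OF _ separately_lipschitz_expectation[OF prob G_lip(1)
          \<open>0 \<le> ?b\<close> fth_lipschitz int(1)]]) (simp add: expected_gradient_components[OF G])
  have E2: "separately_lipschitz \<Theta> (?b + ?a * ?l) (?a * ?l) (\<lambda>x. snd (expected_gradient G x))"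
    by (rule separately_lipschitz_cong[THEN iffD1, OF _ separately_lipschitz_expectation[OF prob G_lip(2)
          \<open>0 \<le> ?a\<close> fth_lipschitz int(2)]]) (simp add: expected_gradient_components[OF G])
  have R: "separately_lipschitz \<Theta> ?r ?r (\<lambda>x. adjoint (DR x) 1)"
    using separately_lipschitz_adjoint[OF norm_DR_le DR_lipschitz _ separately_lipschitz_const[where c = 1], where S = 1]
    by simp
  have F: "separately_lipschitz \<Theta> (?l * (?b + ?a * ?l) + ?l * ?S) (?l * (?a * ?l) + ?l * ?S)
      (\<lambda>x. adjoint (Df x) (snd (expected_gradient G x)))"
    using separately_lipschitz_adjoint[OF norm_Df_le Df_lipschitz norm_snd_expected_gradient_le[OF G] E2] .
  show "separately_lipschitz \<Theta> (lip_pp ?l ?r (Suc n)) (lip_ps ?l ?r (Suc n)) (\<lambda>x. fst (next_gradient G x))"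
    using separately_lipschitz_add[OF separately_lipschitz_add[OF separately_lipschitz_fst[OF R] E1]
        separately_lipschitz_fst[OF F]]
    by (simp add: next_gradient_def add.assoc) (erule separately_lipschitz_mono; simp add: algebra_simps power2_eq_square)
  show "separately_lipschitz \<Theta> (lip_ps ?l ?r (Suc n)) (lip_ss ?l ?r (Suc n)) (\<lambda>x. snd (next_gradient G x))"
    using separately_lipschitz_add[OF separately_lipschitz_snd[OF R] separately_lipschitz_snd[OF F]]
    by (simp add: next_gradient_def) (erule separately_lipschitz_mono; simp add: algebra_simps power2_eq_square)
qed

lemma controlled_gradient_Suc:
  assumes "controlled_gradient n G" "n < N"
  shows "controlled_gradient (Suc n) (next_gradient G)"
proof -
  have "norm (snd (next_gradient G x)) \<le> state_grad_bound Lf_bar LR_bar (Suc n)" if "x \<in> D" for x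
  proof -
    have "norm (snd (next_gradient G x))
        \<le> norm (adjoint (DR x) 1) + norm (adjoint (Df x) (snd (expected_gradient G x)))"
      using norm_triangle_ineq[of "snd (adjoint (DR x) 1)" "snd (adjoint (Df x) (snd (expected_gradient G x)))"]
        norm_snd_le[of "snd (adjoint (DR x) 1)" "fst (adjoint (DR x) 1)"]
        norm_snd_le[of "snd (adjoint (Df x) (snd (expected_gradient G x)))"
          "fst (adjoint (Df x) (snd (expected_gradient G x)))"]
      by (simp add: next_gradient_def)
    also have "\<dots> \<le> LR_bar + Lf_bar * state_grad_bound Lf_bar LR_bar n"
      using norm_adjoint_DR_le[OF that] norm_adjoint_Df_expected_gradient_le[OF assms(1) that] by simp
    finally show ?thesis by simp
  qed
  then show ?thesis
    using has_derivative_Wv_Suc[OF assms] bounded_next_gradient[OF assms(1)]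
      separately_lipschitz_next_gradient[OF assms(1)]
    by (simp add: controlled_gradient_def)
qed

lemma ex_controlled_gradient: "n \<le> N \<Longrightarrow> \<exists>G. controlled_gradient n G"
proof (induction n)
  case 0
  then show ?case using controlled_gradient_0 by blast
next
  case (Suc n)
  then obtain G where "controlled_gradient n G" by auto
  then show ?case using controlled_gradient_Suc Suc.prems Suc_le_eq by blast
qed

lemma controlled_gradient_lipschitz_le:
  assumes "controlled_gradient n G" "n \<le> T" "x \<in> D" "y \<in> D"
  shows "norm (G x - G y) \<le> 44 * real T ^ 5 * LR_bar * Lf_bar powr (4 * (real n - 1)) * dist x y"
proof -
  have "dist (G x) (G y) \<le> (lip_pp Lf_bar LR_bar n + lip_ps Lf_bar LR_bar n
      + (lip_ps Lf_bar LR_bar n + lip_ss Lf_bar LR_bar n)) * dist x y"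
    by (rule controlled_gradient_lipschitz[OF assms(1,3,4)])
  also have "\<dots> \<le> 44 * real T ^ 5 * LR_bar * Lf_bar powr (4 * (real n - 1)) * dist x y"
    using lip_sum_le[OF Lf_bar_ge(1) order_trans[OF zero_le_one LR_bar_ge(1)] assms(2)]
    by (rule mult_right_mono) simp
  finally show ?thesis by (simp add: dist_norm)
qed

end

theorem lemma3:
  fixes f :: "'s::euclidean_space \<Rightarrow> 'a \<Rightarrow> 's"
    and R :: "'s \<Rightarrow> 'a \<Rightarrow> real"
    and pol :: "'th::euclidean_space \<Rightarrow> 's \<Rightarrow> 'a"
    and \<Theta> :: "'th set"
    and p :: "'s measure"
    and T t :: nat
    and Lf LDf LR LDR :: real
  defines "D \<equiv> \<Theta> \<times> (UNIV :: 's set)"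
  defines "fth \<equiv> fcl f pol"
  defines "Rth \<equiv> Rcl R pol"
  assumes Theta_open: "open \<Theta>"
    and noise: "prob_space p" "sets p = sets borel"
    and expect_ok: "\<And>n x. n < T \<Longrightarrow> x \<in> D \<Longrightarrow>
          integrable p (\<lambda>z. Wv fth Rth p n (fst x, fth x + z))"
    and f_lip: "\<forall>x\<in>D. \<forall>y\<in>D. dist (fth x) (fth y) \<le> Lf * dist x y"
    and f_C2: "\<exists>Df :: 'th \<times> 's \<Rightarrow> ('th \<times> 's) \<Rightarrow>\<^sub>L 's.
                 \<exists>D2f :: 'th \<times> 's \<Rightarrow> ('th \<times> 's) \<Rightarrow>\<^sub>L (('th \<times> 's) \<Rightarrow>\<^sub>L 's).
          (\<forall>x\<in>D. (fth has_derivative blinfun_apply (Df x)) (at x))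
        \<and> (\<forall>x\<in>D. (Df has_derivative blinfun_apply (D2f x)) (at x))
        \<and> continuous_on D D2f
        \<and> (\<forall>x\<in>D. \<forall>y\<in>D. frob (Df x - Df y) \<le> LDf * dist x y)"
    and R_lip: "\<forall>x\<in>D. \<forall>y\<in>D. dist (Rth x) (Rth y) \<le> LR * dist x y"
    and R_C2: "\<exists>DR :: 'th \<times> 's \<Rightarrow> ('th \<times> 's) \<Rightarrow>\<^sub>L real.
                 \<exists>D2R :: 'th \<times> 's \<Rightarrow> ('th \<times> 's) \<Rightarrow>\<^sub>L (('th \<times> 's) \<Rightarrow>\<^sub>L real).
          (\<forall>x\<in>D. (Rth has_derivative blinfun_apply (DR x)) (at x))
        \<and> (\<forall>x\<in>D. (DR has_derivative blinfun_apply (D2R x)) (at x))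
        \<and> continuous_on D D2R
        \<and> (\<forall>x\<in>D. \<forall>y\<in>D. frob (DR x - DR y) \<le> LDR * dist x y)"
    and t_le: "t \<le> T"
  shows "\<exists>G :: 'th \<times> 's \<Rightarrow> 'th \<times> 's.
          (\<forall>x\<in>D. (Vt fth Rth p T t has_derivative (\<lambda>h. G x \<bullet> h)) (at x))
        \<and> (\<forall>x\<in>D. \<forall>y\<in>D. norm (G x - G y)
              \<le> 44 * real T ^ 5 * Lbar LDR LR * Lbar LDf Lf powr (4 * (real T - real t - 1)) * dist x y)"
proof -
  \<comment> \<open>Lipschitz first derivatives suffice; the second-derivative parts of f_C2 and R_C2 are unused.\<close>
  obtain Df :: "'th \<times> 's \<Rightarrow> ('th \<times> 's) \<Rightarrow>\<^sub>L 's" where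
    Df: "\<forall>x\<in>D. (fth has_derivative blinfun_apply (Df x)) (at x)"
      "\<forall>x\<in>D. \<forall>y\<in>D. frob (Df x - Df y) \<le> LDf * dist x y"
    using f_C2 by blast
  obtain DR :: "'th \<times> 's \<Rightarrow> ('th \<times> 's) \<Rightarrow>\<^sub>L real" where
    DR: "\<forall>x\<in>D. (Rth has_derivative blinfun_apply (DR x)) (at x)"
      "\<forall>x\<in>D. \<forall>y\<in>D. frob (DR x - DR y) \<le> LDR * dist x y"
    using R_C2 by blast
  interpret value_function_regularity \<Theta> fth Rth p T Df DR Lf LDf LR LDR
    by (rule value_function_regularity.intro)
       (use Theta_open noise expect_ok f_lip R_lip Df DR in \<open>simp_all add: D_def\<close>)
  obtain G where G: "controlled_gradient (T - t) G" using ex_controlled_gradient[of "T - t"] by auto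
  have "real (T - t) - 1 = real T - real t - 1" using t_le by (simp add: of_nat_diff)
  then have "\<forall>x\<in>D. \<forall>y\<in>D. norm (G x - G y)
      \<le> 44 * real T ^ 5 * LR_bar * Lf_bar powr (4 * (real T - real t - 1)) * dist x y"
    using controlled_gradient_lipschitz_le[OF G diff_le_self] by (simp add: D_def)
  moreover have "\<forall>x\<in>D. (Vt fth Rth p T t has_derivative (\<lambda>h. G x \<bullet> h)) (at x)"
    using G by (simp add: controlled_gradient_def Vt_def D_def)
  ultimately show ?thesis by blast
qed

end
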